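(* Let $X$ be a real Banach space and $h:X\times X^*\to\mathbb{R}\cup\{\pm\infty\}$ such that $(\mathcal{J}h)(x,x^* )\geq\langle x,x^*\rangle$ for all $(x,x^* )\in X\times X^*$. Then $$P_2(D(\mathcal{J}h))=P_1\big(D(h^* )\cap(X^*\times X)\big)\subseteq\mathrm{cl}_{w*}\,\mathrm{conv}\,P_2(D(h)),$$ $$P_1(D(\mathcal{J}h))=P_2\big(D(h^* )\cap(X^*\times X)\big)\subseteq\mathrm{cl}\,\mathrm{conv}\,P_1(D(h)).$$
   Context: $X$ is identified with its canonical image in $X^{**}$. $P_1,P_2$ are the canonical projections of a Cartesian product onto its factors; $D(f)=\{z\;|\;f(z)<\infty\}$. The conjugate of $h$ is $h^*:X^*\times X^{**}\to\mathbb{R}\cup\{\pm\infty\}$, $h^*(x^*,x^{**})=\sup_{(y,y^* )}\langle y,x^*\rangle+\langle x^{**},y^*\rangle-h(y,y^* )$, and $(\mathcal{J}h)(x,x^* )=h^*(x^*,x)$. $\mathrm{cl}$ is norm closure, $\mathrm{cl}_{w*}$ weak-$*$ closure in $X^*$, $\mathrm{conv}$ convex hull. *)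

theory Defs
  imports "HOL-Analysis.Analysis"
begin

definition canon :: "'a::real_normed_vector \<Rightarrow> (('a \<Rightarrow>\<^sub>L real) \<Rightarrow>\<^sub>L real)" where
  "canon x = Blinfun (\<lambda>f. blinfun_apply f x)"

definition fconj ::
  "('a::real_normed_vector \<times> ('a \<Rightarrow>\<^sub>L real) \<Rightarrow> ereal)
   \<Rightarrow> ('a \<Rightarrow>\<^sub>L real) \<times> (('a \<Rightarrow>\<^sub>L real) \<Rightarrow>\<^sub>L real) \<Rightarrow> ereal" where
  "fconj h = (\<lambda>(xs, xss). SUP yys \<in> UNIV.
      ereal (blinfun_apply xs (fst yys) + blinfun_apply xss (snd yys)) - h yys)"

definition Jop ::
  "('a::real_normed_vector \<times> ('a \<Rightarrow>\<^sub>L real) \<Rightarrow> ereal) \<Rightarrow> 'a \<times> ('a \<Rightarrow>\<^sub>L real) \<Rightarrow> ereal" where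
  "Jop h = (\<lambda>(x, xs). fconj h (xs, canon x))"

definition dom_f :: "('z \<Rightarrow> ereal) \<Rightarrow> 'z set" where
  "dom_f f = {z. f z < \<infinity>}"

text \<open>Weak-* topology on X*: the coarsest topology making all evaluations continuous,
  i.e. the pullback of the product (pointwise) topology on functions.\<close>
definition weak_star_topology :: "('a::real_normed_vector \<Rightarrow>\<^sub>L real) topology" where
  "weak_star_topology = pullback_topology UNIV blinfun_apply euclidean"

end

(* If Jop h (x, xs) < \<infinity>, then (x, xs) cannot be strictly separated from dom h by a functional that
   sees only one coordinate. Along (x + t u, xs + t \<phi>) with \<phi> u = 0 the pairing grows at rate
   \<phi> x + xs u, while the supremum defining Jop h grows at most at rate sup {\<phi> y + ys u | (y, ys) \<in> dom h};
   a strict gap between the two rates contradicts Jop h \<ge> pairing for large t. Taking u = 0 and \<phi> a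
   norm-continuous functional separating x from conv P1(dom h) gives the norm-closure inclusion; taking
   \<phi> = 0 gives the weak-* inclusion, since the weak-* continuous functionals on X* are evaluations at
   points u of X. The separating functionals come from Hahn-Banach, proved via Zorn's lemma: a minimal
   sublinear function is linear. *)

theory Submission
  imports Defs
begin

section \<open>Sublinear functions and the Hahn-Banach theorem\<close>

definition sublinear :: "('v::real_vector \<Rightarrow> real) \<Rightarrow> bool" where
  "sublinear q \<longleftrightarrow> (\<forall>x y. q (x + y) \<le> q x + q y) \<and> (\<forall>c x. 0 \<le> c \<longrightarrow> q (c *\<^sub>R x) = c * q x)"

lemma sublinear_add: "sublinear q \<Longrightarrow> q (x + y) \<le> q x + q y"
  by (simp add: sublinear_def)

lemma sublinear_scaleR: "sublinear q \<Longrightarrow> 0 \<le> c \<Longrightarrow> q (c *\<^sub>R x) = c * q x"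
  by (simp add: sublinear_def)

lemma sublinear_zero: "sublinear q \<Longrightarrow> q 0 = 0"
  using sublinear_scaleR[of q 0 0] by simp

lemma sublinear_neg_le: "sublinear q \<Longrightarrow> - q (- x) \<le> q x"
  using sublinear_add[of q x "- x"] sublinear_zero[of q] by simp

lemma sublinearI:
  assumes "\<And>x y. q (x + y) \<le> q x + q y"
    and "\<And>c x. 0 < c \<Longrightarrow> q (c *\<^sub>R x) \<le> c * q x"
    and "q 0 = 0"
  shows "sublinear q"
  unfolding sublinear_def
proof (intro conjI allI impI assms)
  fix c :: real and x assume "0 \<le> c"
  show "q (c *\<^sub>R x) = c * q x"
  proof (cases "c = 0")
    case False
    with \<open>0 \<le> c\<close> have c: "0 < c" by simp
    have "q x = q (inverse c *\<^sub>R (c *\<^sub>R x))" using c by simp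
    also have "\<dots> \<le> inverse c * q (c *\<^sub>R x)" using c by (intro assms(2)) simp
    finally have "c * q x \<le> q (c *\<^sub>R x)" using c by (simp add: field_simps)
    with assms(2)[OF c, of x] show ?thesis by linarith
  qed (simp add: assms(3))
qed

(* infconv_cone N S is the largest sublinear function below N whose value at c is at most -r
   for every (c, r) \<in> S. *)
definition infconv_cone :: "('v::real_vector \<Rightarrow> real) \<Rightarrow> ('v \<times> real) set \<Rightarrow> 'v \<Rightarrow> real" where
  "infconv_cone N S y = (INF z\<in>conic hull S. N (y - fst z) - snd z)"

context
  fixes N :: "'v::real_vector \<Rightarrow> real" and S :: "('v \<times> real) set"
  assumes N: "sublinear N" and S: "convex S" "S \<noteq> {}"
    and bound: "\<And>z. z \<in> S \<Longrightarrow> snd z \<le> N (- fst z)"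
begin

private lemma conic_hull_bound:
  assumes "z \<in> conic hull S"
  shows "snd z \<le> N (- fst z)"
proof -
  obtain c w where "z = c *\<^sub>R w" "0 \<le> c" "w \<in> S"
    using assms by (auto simp: conic_hull_explicit)
  then show ?thesis
    using bound[of w] sublinear_scaleR[OF N, of c "- fst w"] by (simp add: mult_left_mono)
qed

private lemma convex_cone_conic_hull: "convex_cone (conic hull S)"
  using S hull_subset[of S conic] by (auto simp: convex_cone_def convex_conic_hull conic_conic_hull)

private lemma infconv_bdd: "bdd_below ((\<lambda>z. N (y - fst z) - snd z) ` (conic hull S))"
proof (rule bdd_belowI2)
  fix z assume "z \<in> conic hull S"
  then have "snd z \<le> N (- fst z)" by (rule conic_hull_bound)
  moreover have "N (- fst z) \<le> N (y - fst z) + N (- y)"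
    using sublinear_add[OF N, of "y - fst z" "- y"] by simp
  ultimately show "- N (- y) \<le> N (y - fst z) - snd z" by simp
qed

lemma infconv_cone_le: "z \<in> conic hull S \<Longrightarrow> infconv_cone N S y \<le> N (y - fst z) - snd z"
  unfolding infconv_cone_def by (rule cINF_lower[OF infconv_bdd])

private lemma infconv_greatest:
  "(\<And>z. z \<in> conic hull S \<Longrightarrow> c \<le> N (y - fst z) - snd z) \<Longrightarrow> c \<le> infconv_cone N S y"
  unfolding infconv_cone_def using S(2) by (intro cINF_greatest) (auto dest: hull_subset[THEN subsetD])

lemma infconv_cone_le_self: "infconv_cone N S y \<le> N y"
  using infconv_cone_le[of 0 y] convex_cone_contains_0[OF convex_cone_conic_hull] by simp

lemma sublinear_infconv_cone: "sublinear (infconv_cone N S)"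
proof (rule sublinearI)
  fix x y
  have "infconv_cone N S (x + y) - (N (x - fst z1) - snd z1) \<le> infconv_cone N S y"
    if z1: "z1 \<in> conic hull S" for z1
  proof (rule infconv_greatest)
    fix z2 assume z2: "z2 \<in> conic hull S"
    have "infconv_cone N S (x + y) \<le> N (x + y - fst (z1 + z2)) - snd (z1 + z2)"
      using convex_cone_add[OF convex_cone_conic_hull z1 z2] by (rule infconv_cone_le)
    also have "\<dots> \<le> (N (x - fst z1) - snd z1) + (N (y - fst z2) - snd z2)"
      using sublinear_add[OF N, of "x - fst z1" "y - fst z2"] by (simp add: algebra_simps)
    finally show "infconv_cone N S (x + y) - (N (x - fst z1) - snd z1) \<le> N (y - fst z2) - snd z2"
      by simp
  qed
  then have "infconv_cone N S (x + y) - infconv_cone N S y \<le> infconv_cone N S x"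
    by (intro infconv_greatest) (simp add: algebra_simps)
  then show "infconv_cone N S (x + y) \<le> infconv_cone N S x + infconv_cone N S y"
    by simp
next
  fix c :: real and x assume c: "0 < c"
  have "infconv_cone N S (c *\<^sub>R x) / c \<le> N (x - fst z) - snd z" if z: "z \<in> conic hull S" for z
  proof -
    have "c *\<^sub>R z \<in> conic hull S"
      using convex_cone_scaleR[OF convex_cone_conic_hull _ z] c by simp
    then have "infconv_cone N S (c *\<^sub>R x) \<le> N (c *\<^sub>R x - c *\<^sub>R fst z) - c * snd z"
      by (auto dest: infconv_cone_le)
    also have "\<dots> = c * (N (x - fst z) - snd z)"
      using sublinear_scaleR[OF N, of c "x - fst z"] c by (simp add: algebra_simps)
    finally show ?thesis
      using c by (simp add: field_simps)
  qed
  then have "infconv_cone N S (c *\<^sub>R x) / c \<le> infconv_cone N S x"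
    by (rule infconv_greatest)
  with c show "infconv_cone N S (c *\<^sub>R x) \<le> c * infconv_cone N S x"
    by (simp add: field_simps)
next
  have "0 \<le> infconv_cone N S 0"
    by (rule infconv_greatest) (simp add: conic_hull_bound)
  with infconv_cone_le_self[of 0] sublinear_zero[OF N] show "infconv_cone N S 0 = 0"
    by simp
qed

end

lemma minimal_sublinear_imp_linear:
  assumes q: "sublinear q"
    and minimal: "\<And>q'. sublinear q' \<Longrightarrow> q' \<le> q \<Longrightarrow> q' = q"
  shows "linear q"
proof -
  have neg: "q (- a) = - q a" for a
  proof -
    let ?S = "{(- a, q a)}"
    have S: "convex ?S" "?S \<noteq> {}" "\<And>z. z \<in> ?S \<Longrightarrow> snd z \<le> q (- fst z)"
      by auto
    have "infconv_cone q ?S \<le> q"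
      using infconv_cone_le_self[OF q S] by (simp add: le_fun_def)
    with sublinear_infconv_cone[OF q S] have "infconv_cone q ?S = q"
      by (rule minimal)
    then have "q (- a) \<le> q (- a - (- a)) - q a"
      using infconv_cone_le[OF q S, of "(- a, q a)" "- a"] by (simp add: hull_inc)
    with sublinear_zero[OF q] sublinear_neg_le[OF q, of a] show ?thesis
      by simp
  qed
  show ?thesis
  proof (rule linearI)
    fix x y
    show "q (x + y) = q x + q y"
      using sublinear_add[OF q, of x y] sublinear_add[OF q, of "- x" "- y"] neg[of "x + y"] neg[of x] neg[of y]
      by simp
  next
    fix c :: real and x
    show "q (c *\<^sub>R x) = c *\<^sub>R q x"
    proof (cases "0 \<le> c")
      case False
      then show ?thesis
        using sublinear_scaleR[OF q, of "- c" "- x"] neg[of x] by simp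
    qed (simp add: sublinear_scaleR[OF q])
  qed
qed

lemma sublinear_INF_chain:
  fixes Q :: "('v::real_vector \<Rightarrow> real) set"
  assumes "Q \<noteq> {}"
    and sub: "\<And>q. q \<in> Q \<Longrightarrow> sublinear q"
    and bound: "\<And>q. q \<in> Q \<Longrightarrow> q \<le> p"
    and chain: "\<And>q1 q2. q1 \<in> Q \<Longrightarrow> q2 \<in> Q \<Longrightarrow> q1 \<le> q2 \<or> q2 \<le> q1"
  shows "sublinear (\<lambda>y. INF q\<in>Q. q y)" and "\<And>q. q \<in> Q \<Longrightarrow> (\<lambda>y. INF q\<in>Q. q y) \<le> q"
proof -
  have bdd: "bdd_below ((\<lambda>q. q y) ` Q)" for y
  proof (rule bdd_belowI2)
    fix q assume "q \<in> Q"
    moreover have "q (- y) \<le> p (- y)"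
      using bound[OF \<open>q \<in> Q\<close>] by (simp add: le_fun_def)
    ultimately show "- p (- y) \<le> q y"
      using sublinear_neg_le[OF sub, of q y] by linarith
  qed
  have lower: "(INF q\<in>Q. q y) \<le> q y" if "q \<in> Q" for q y
    by (rule cINF_lower[OF bdd that])
  have greatest: "c \<le> (INF q\<in>Q. q y)" if "\<And>q. q \<in> Q \<Longrightarrow> c \<le> q y" for c y
    using \<open>Q \<noteq> {}\<close> that by (rule cINF_greatest)
  show "(\<lambda>y. INF q\<in>Q. q y) \<le> q" if "q \<in> Q" for q
    using lower[OF that] by (simp add: le_fun_def)
  show "sublinear (\<lambda>y. INF q\<in>Q. q y)"
  proof (rule sublinearI)
    fix x y
    have key: "(INF q\<in>Q. q (x + y)) \<le> q1 x + q2 y" if "q1 \<in> Q" "q2 \<in> Q" for q1 q2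
      using chain[OF that]
    proof
      assume "q1 \<le> q2"
      then have "q1 y \<le> q2 y" by (simp add: le_fun_def)
      then show ?thesis
        using lower[OF \<open>q1 \<in> Q\<close>, of "x + y"] sublinear_add[OF sub[OF \<open>q1 \<in> Q\<close>], of x y]
        by linarith
    next
      assume "q2 \<le> q1"
      then have "q2 x \<le> q1 x" by (simp add: le_fun_def)
      then show ?thesis
        using lower[OF \<open>q2 \<in> Q\<close>, of "x + y"] sublinear_add[OF sub[OF \<open>q2 \<in> Q\<close>], of x y]
        by linarith
    qed
    have "(INF q\<in>Q. q (x + y)) - q1 x \<le> (INF q\<in>Q. q y)" if "q1 \<in> Q" for q1
    proof (rule greatest)
      fix q2 assume "q2 \<in> Q"
      with key[OF that] show "(INF q\<in>Q. q (x + y)) - q1 x \<le> q2 y" by fastforce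
    qed
    then have "(INF q\<in>Q. q (x + y)) - (INF q\<in>Q. q y) \<le> (INF q\<in>Q. q x)"
      by (intro greatest) (simp add: algebra_simps)
    then show "(INF q\<in>Q. q (x + y)) \<le> (INF q\<in>Q. q x) + (INF q\<in>Q. q y)"
      by simp
  next
    fix c :: real and x :: 'v assume c: "0 < c"
    have "(INF q\<in>Q. q (c *\<^sub>R x)) / c \<le> (INF q\<in>Q. q x)"
    proof (rule greatest)
      fix q assume "q \<in> Q"
      then show "(INF q\<in>Q. q (c *\<^sub>R x)) / c \<le> q x"
        using lower[of q "c *\<^sub>R x"] sublinear_scaleR[OF sub, of q c x] c by (simp add: field_simps)
    qed
    with c show "(INF q\<in>Q. q (c *\<^sub>R x)) \<le> c * (INF q\<in>Q. q x)"
      by (simp add: field_simps)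
  next
    have "(\<lambda>q. q 0) ` Q = {0}"
      using \<open>Q \<noteq> {}\<close> sublinear_zero[OF sub] by (auto intro: rev_image_eqI)
    then show "(INF q\<in>Q. q 0) = 0" by simp
  qed
qed

lemma exists_minimal_sublinear_le:
  fixes p :: "'v::real_vector \<Rightarrow> real"
  assumes "sublinear p"
  shows "\<exists>q. sublinear q \<and> q \<le> p \<and> (\<forall>q'. sublinear q' \<longrightarrow> q' \<le> q \<longrightarrow> q' = q)"
proof -
  define A where "A = {q. sublinear q \<and> q \<le> p}"
  have "\<exists>m\<in>A. \<forall>q\<in>A. q \<le> m \<longrightarrow> q = m"
  proof (rule predicate_Zorn)
    show "partial_order_on A (relation_of (\<lambda>q1 q2. q2 \<le> q1) A)"
      by (rule partial_order_on_relation_ofI) auto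
  next
    fix C assume C: "C \<in> Chains (relation_of (\<lambda>q1 q2. q2 \<le> q1) A)"
    then have "C \<subseteq> A" by (rule Chains_relation_of)
    show "\<exists>u\<in>A. \<forall>q\<in>C. u \<le> q"
    proof (cases "C = {}")
      case True
      with assms show ?thesis by (auto simp: A_def)
    next
      case False
      have chain: "q1 \<le> q2 \<or> q2 \<le> q1" if "q1 \<in> C" "q2 \<in> C" for q1 q2
        using C that unfolding Chains_def relation_of_def by auto
      define u where "u y = (INF q\<in>C. q y)" for y
      have sub: "\<And>q. q \<in> C \<Longrightarrow> sublinear q" and bound: "\<And>q. q \<in> C \<Longrightarrow> q \<le> p"
        using \<open>C \<subseteq> A\<close> by (auto simp: A_def)
      have "sublinear u" and "\<And>q. q \<in> C \<Longrightarrow> u \<le> q"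
        unfolding u_def using sublinear_INF_chain[OF False sub bound chain] by blast+
      moreover obtain q0 where "q0 \<in> C" using False by blast
      ultimately have "u \<in> A"
        using \<open>C \<subseteq> A\<close> by (auto simp: A_def intro: order_trans)
      then show ?thesis
        using \<open>\<And>q. q \<in> C \<Longrightarrow> u \<le> q\<close> by blast
    qed
  qed
  then obtain m where "sublinear m" "m \<le> p" and maximal: "\<And>q. q \<in> A \<Longrightarrow> q \<le> m \<Longrightarrow> q = m"
    unfolding A_def by blast
  moreover have "q \<in> A" if "sublinear q" "q \<le> m" for q
    using that \<open>m \<le> p\<close> unfolding A_def by auto
  ultimately show ?thesis
    by blast
qed

theorem sublinear_dominates_linear:
  assumes "sublinear p"
  shows "\<exists>f. linear f \<and> f \<le> p"
  using exists_minimal_sublinear_le[OF assms] minimal_sublinear_imp_linear by blast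

lemma linear_le_sublinear_on_cone:
  fixes N :: "'v::real_vector \<Rightarrow> real" and S :: "('v \<times> real) set"
  assumes N: "sublinear N" and S: "convex S" "S \<noteq> {}"
    and bound: "\<And>z. z \<in> S \<Longrightarrow> snd z \<le> N (- fst z)"
  shows "\<exists>f. linear f \<and> f \<le> N \<and> (\<forall>z\<in>S. f (fst z) \<le> - snd z)"
proof -
  obtain f where f: "linear f" "f \<le> infconv_cone N S"
    using sublinear_dominates_linear[OF sublinear_infconv_cone[OF assms]] by blast
  have "f \<le> N"
    using f(2) infconv_cone_le_self[OF assms] by (auto simp: le_fun_def intro: order_trans)
  moreover have "f (fst z) \<le> - snd z" if "z \<in> S" for z
    using le_funD[OF f(2), of "fst z"] infconv_cone_le[OF assms hull_inc[OF that], of "fst z"]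
      sublinear_zero[OF N] by simp
  ultimately show ?thesis
    using f(1) by blast
qed

lemma sublinear_separation:
  fixes N :: "'v::real_vector \<Rightarrow> real"
  assumes N: "sublinear N" and K: "convex K" "K \<noteq> {}"
    and gap: "\<And>k. k \<in> K \<Longrightarrow> d \<le> N (x - k)"
  shows "\<exists>f. linear f \<and> f \<le> N \<and> (\<forall>k\<in>K. f k \<le> f x - d)"
proof -
  let ?S = "((\<lambda>k. k - x) ` K) \<times> {d}"
  have "convex ?S" "?S \<noteq> {}"
    using K by (auto intro: convex_Times convex_translation_subtract)
  moreover have "snd z \<le> N (- fst z)" if "z \<in> ?S" for z
    using that gap by auto
  ultimately obtain f where f: "linear f" "f \<le> N" "\<forall>z\<in>?S. f (fst z) \<le> - snd z"
    using linear_le_sublinear_on_cone[OF N] by blast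
  have "f k \<le> f x - d" if "k \<in> K" for k
    using f(3) that linear_diff[OF f(1), of k x] by fastforce
  with f(1,2) show ?thesis
    by blast
qed

section \<open>Separation in X and in the weak-* topology of X*\<close>

lemma linear_combination_of_kernel_subset:
  fixes e :: "'z \<Rightarrow> 'v::real_vector \<Rightarrow> real"
  assumes "finite Z" and e: "\<And>z. linear (e z)" and "linear F"
    and "\<And>\<eta>. (\<forall>z\<in>Z. e z \<eta> = 0) \<Longrightarrow> F \<eta> = 0"
  shows "\<exists>a. \<forall>\<eta>. F \<eta> = (\<Sum>z\<in>Z. a z * e z \<eta>)"
  using assms(1,3,4)
proof (induction Z arbitrary: F rule: finite_induct)
  case empty
  then show ?case by auto
next
  case (insert z Z F)
  show ?case
  proof (cases "\<forall>\<eta>. (\<forall>w\<in>Z. e w \<eta> = 0) \<longrightarrow> e z \<eta> = 0")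
    case True
    then obtain a where a: "\<forall>\<eta>. F \<eta> = (\<Sum>w\<in>Z. a w * e w \<eta>)"
      using insert.IH[OF insert.prems(1)] insert.prems(2) by auto
    have "F \<eta> = (\<Sum>w\<in>insert z Z. (a(z := 0)) w * e w \<eta>)" for \<eta>
      using a insert.hyps by (simp add: sum.insert) (rule sum.cong, auto)
    then show ?thesis by blast
  next
    case False
    \<comment> \<open>pick \<eta>1 in the common kernel of the other e w with e z \<eta>1 = 1 and project along it\<close>
    then obtain \<eta>0 where "\<forall>w\<in>Z. e w \<eta>0 = 0" "e z \<eta>0 \<noteq> 0" by blast
    define \<eta>1 where "\<eta>1 = (1 / e z \<eta>0) *\<^sub>R \<eta>0"
    have \<eta>1: "\<forall>w\<in>Z. e w \<eta>1 = 0" "e z \<eta>1 = 1"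
      using \<open>\<forall>w\<in>Z. e w \<eta>0 = 0\<close> \<open>e z \<eta>0 \<noteq> 0\<close> linear_scale[OF e] unfolding \<eta>1_def by auto
    define G where "G \<eta> = F (\<eta> - e z \<eta> *\<^sub>R \<eta>1)" for \<eta>
    have "linear (\<lambda>\<eta>. \<eta> - e z \<eta> *\<^sub>R \<eta>1)"
      by (rule linearI) (simp_all add: linear_add[OF e] linear_scale[OF e] algebra_simps scaleR_add_left)
    then have "linear G"
      unfolding G_def using linear_compose[OF _ insert.prems(1)] by (simp add: o_def)
    moreover have "G \<eta> = 0" if "\<forall>w\<in>Z. e w \<eta> = 0" for \<eta>
      unfolding G_def
      using that \<eta>1 linear_diff[OF e] linear_scale[OF e] by (intro insert.prems(2)) auto
    ultimately obtain a where a: "\<forall>\<eta>. G \<eta> = (\<Sum>w\<in>Z. a w * e w \<eta>)"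
      using insert.IH by blast
    have "F \<eta> = (\<Sum>w\<in>insert z Z. (a(z := F \<eta>1)) w * e w \<eta>)" for \<eta>
    proof -
      have "F \<eta> = G \<eta> + e z \<eta> * F \<eta>1"
        unfolding G_def using linear_diff[OF insert.prems(1)] linear_scale[OF insert.prems(1)] by simp
      also have "G \<eta> = (\<Sum>w\<in>Z. (a(z := F \<eta>1)) w * e w \<eta>)"
        using a insert.hyps by (auto intro: sum.cong)
      finally show ?thesis
        using insert.hyps by (simp add: sum.insert)
    qed
    then show ?thesis by blast
  qed
qed

lemma open_fun_contains_finite_nbhd:
  fixes U :: "('a \<Rightarrow> real) set"
  assumes "open U" "g \<in> U"
  shows "\<exists>Z \<epsilon>. finite Z \<and> \<epsilon> > 0 \<and> (\<forall>g'. (\<forall>z\<in>Z. \<bar>g' z - g z\<bar> < \<epsilon>) \<longrightarrow> g' \<in> U)"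
proof -
  have "openin (product_topology (\<lambda>i. euclidean) UNIV) U"
    using assms(1) unfolding open_fun_def by auto
  from product_topology_open_contains_basis[OF this assms(2)]
  obtain X where X: "g \<in> (\<Pi>\<^sub>E i\<in>UNIV. X i)" "\<And>i. open (X i)" "finite {i. X i \<noteq> UNIV}"
      "(\<Pi>\<^sub>E i\<in>UNIV. X i) \<subseteq> U"
    by auto
  define Z where "Z = {i. X i \<noteq> UNIV}"
  have "\<exists>e>0. \<forall>y. \<bar>y - g i\<bar> < e \<longrightarrow> y \<in> X i" for i
  proof -
    obtain e where "e > 0" "ball (g i) e \<subseteq> X i"
      using X(1,2) openE[of "X i" "g i"] by auto
    then show ?thesis
      by (metis abs_minus_commute dist_real_def mem_ball subsetD)
  qed
  then obtain e where e: "\<And>i. e i > 0" "\<And>i y. \<bar>y - g i\<bar> < e i \<Longrightarrow> y \<in> X i"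
    by metis
  define \<epsilon> where "\<epsilon> = Min (insert 1 (e ` Z))"
  have "finite Z"
    using X(3) by (simp add: Z_def)
  then have "\<epsilon> > 0" and \<epsilon>_le: "\<And>i. i \<in> Z \<Longrightarrow> \<epsilon> \<le> e i"
    using e(1) by (auto simp: \<epsilon>_def Min_gr_iff)
  have "g' \<in> U" if "\<forall>z\<in>Z. \<bar>g' z - g z\<bar> < \<epsilon>" for g'
  proof -
    have "g' i \<in> X i" for i
    proof (cases "i \<in> Z")
      case True
      then show ?thesis
        using that \<epsilon>_le e(2) by (meson less_le_trans)
    qed (simp add: Z_def)
    then show ?thesis
      using X(4) by (auto simp: PiE_UNIV_domain)
  qed
  with \<open>finite Z\<close> \<open>\<epsilon> > 0\<close> show ?thesis
    by blast
qed

lemma weak_star_open_contains_finite_nbhd: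
  fixes xs :: "'a::real_normed_vector \<Rightarrow>\<^sub>L real"
  assumes "openin weak_star_topology T" "xs \<in> T"
  shows "\<exists>Z \<epsilon>. finite Z \<and> \<epsilon> > 0 \<and> (\<forall>\<eta>. (\<forall>z\<in>Z. \<bar>blinfun_apply \<eta> z - blinfun_apply xs z\<bar> < \<epsilon>) \<longrightarrow> \<eta> \<in> T)"
proof -
  obtain U where "open U" "T = blinfun_apply -` U"
    using assms(1) unfolding weak_star_topology_def openin_pullback_topology by auto
  with assms(2) show ?thesis
    using open_fun_contains_finite_nbhd[of U "blinfun_apply xs"] by auto
qed

lemma sublinear_norm: "sublinear norm"
  by (simp add: sublinear_def norm_triangle_ineq)

lemma sublinear_sum_abs_eval: "sublinear (\<lambda>\<eta> :: 'a::real_normed_vector \<Rightarrow>\<^sub>L real. \<Sum>z\<in>Z. \<bar>blinfun_apply \<eta> z\<bar>)"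
proof (rule sublinearI)
  fix \<eta> \<zeta> :: "'a \<Rightarrow>\<^sub>L real"
  show "(\<Sum>z\<in>Z. \<bar>blinfun_apply (\<eta> + \<zeta>) z\<bar>) \<le> (\<Sum>z\<in>Z. \<bar>blinfun_apply \<eta> z\<bar>) + (\<Sum>z\<in>Z. \<bar>blinfun_apply \<zeta> z\<bar>)"
    unfolding sum.distrib[symmetric] by (rule sum_mono) (simp add: blinfun.add_left abs_triangle_ineq)
qed (simp_all add: blinfun.scaleR_left abs_mult sum_distrib_left)

lemma dominated_by_sum_abs_eval_imp_eval:
  fixes F :: "('a::real_normed_vector \<Rightarrow>\<^sub>L real) \<Rightarrow> real"
  assumes "finite Z" "linear F" and bound: "\<And>\<eta>. F \<eta> \<le> (\<Sum>z\<in>Z. \<bar>blinfun_apply \<eta> z\<bar>)"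
  shows "\<exists>x0. \<forall>\<eta>. F \<eta> = blinfun_apply \<eta> x0"
proof -
  have eval: "linear (\<lambda>\<eta> :: 'a \<Rightarrow>\<^sub>L real. blinfun_apply \<eta> z)" for z
    by (rule linearI) (simp_all add: blinfun.add_left blinfun.scaleR_left)
  have "F \<eta> = 0" if "\<forall>z\<in>Z. blinfun_apply \<eta> z = 0" for \<eta>
    using bound[of \<eta>] bound[of "- \<eta>"] that linear_neg[OF \<open>linear F\<close>, of \<eta>]
    by (simp add: blinfun.minus_left)
  then obtain a where a: "\<And>\<eta>. F \<eta> = (\<Sum>z\<in>Z. a z * blinfun_apply \<eta> z)"
    using linear_combination_of_kernel_subset[where e = "\<lambda>z \<eta>. blinfun_apply \<eta> z", OF \<open>finite Z\<close> eval \<open>linear F\<close>]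
    by blast
  have "F \<eta> = blinfun_apply \<eta> (\<Sum>z\<in>Z. a z *\<^sub>R z)" for \<eta>
    by (simp add: a blinfun.sum_right blinfun.scaleR_right)
  then show ?thesis by blast
qed

lemma norm_separation:
  fixes K :: "'a::real_normed_vector set"
  assumes "convex K" "K \<noteq> {}" "x \<notin> closure K"
  shows "\<exists>F :: 'a \<Rightarrow>\<^sub>L real. \<exists>\<epsilon>>0. \<forall>k\<in>K. blinfun_apply F k \<le> blinfun_apply F x - \<epsilon>"
proof -
  obtain \<epsilon> where "\<epsilon> > 0" and "\<And>k. k \<in> K \<Longrightarrow> \<epsilon> \<le> norm (k - x)"
    using assms(3) unfolding closure_approachable dist_norm by (meson not_less)
  then have gap: "\<And>k. k \<in> K \<Longrightarrow> \<epsilon> \<le> norm (x - k)"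
    by (simp add: norm_minus_commute)
  obtain f where f: "linear f" "f \<le> norm" and sep: "\<forall>k\<in>K. f k \<le> f x - \<epsilon>"
    using sublinear_separation[OF sublinear_norm assms(1,2) gap] by blast
  have "bounded_linear f"
  proof (rule bounded_linear_intro[where K = 1])
    fix y
    have "f y \<le> norm y" "f (- y) \<le> norm (- y)"
      using f(2) unfolding le_fun_def by blast+
    then show "norm (f y) \<le> norm y * 1"
      using linear_neg[OF f(1), of y] by simp
  qed (simp_all add: linear_add[OF f(1)] linear_scale[OF f(1)])
  then have "blinfun_apply (Blinfun f) = f"
    by (rule bounded_linear_Blinfun_apply)
  with \<open>\<epsilon> > 0\<close> sep show ?thesis
    by metis
qed

lemma weak_star_separation:
  fixes K :: "('a::real_normed_vector \<Rightarrow>\<^sub>L real) set"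
  assumes "convex K" "K \<noteq> {}" "xs \<notin> weak_star_topology closure_of K"
  shows "\<exists>x0. \<exists>\<epsilon>>0. \<forall>k\<in>K. blinfun_apply k x0 \<le> blinfun_apply xs x0 - \<epsilon>"
proof -
  obtain T where T: "openin weak_star_topology T" "xs \<in> T" "T \<inter> K = {}"
    using assms(3) unfolding in_closure_of weak_star_topology_def topspace_pullback_topology by auto
  then obtain Z \<epsilon> where "finite Z" "\<epsilon> > 0"
    and nbhd: "\<And>\<eta>. (\<forall>z\<in>Z. \<bar>blinfun_apply \<eta> z - blinfun_apply xs z\<bar> < \<epsilon>) \<Longrightarrow> \<eta> \<in> T"
    using weak_star_open_contains_finite_nbhd[OF T(1,2)] by blast
  define N where "N \<eta> = (\<Sum>z\<in>Z. \<bar>blinfun_apply \<eta> z\<bar>)" for \<eta> :: "'a \<Rightarrow>\<^sub>L real"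
  have gap: "\<epsilon> \<le> N (xs - k)" if "k \<in> K" for k
  proof (rule ccontr)
    assume small: "\<not> \<epsilon> \<le> N (xs - k)"
    have "\<bar>blinfun_apply k z - blinfun_apply xs z\<bar> < \<epsilon>" if "z \<in> Z" for z
    proof -
      have "\<bar>blinfun_apply (xs - k) z\<bar> \<le> N (xs - k)"
        unfolding N_def using \<open>finite Z\<close> that by (intro member_le_sum) auto
      with small show ?thesis
        by (simp add: blinfun.diff_left abs_minus_commute)
    qed
    then have "k \<in> T"
      using nbhd by blast
    with T(3) \<open>k \<in> K\<close> show False by blast
  qed
  have "sublinear N"
    unfolding N_def by (rule sublinear_sum_abs_eval)
  then obtain F where F: "linear F" "F \<le> N" and sep: "\<forall>k\<in>K. F k \<le> F xs - \<epsilon>"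
    using sublinear_separation[OF \<open>sublinear N\<close> assms(1,2) gap] by blast
  have "\<And>\<eta>. F \<eta> \<le> (\<Sum>z\<in>Z. \<bar>blinfun_apply \<eta> z\<bar>)"
    using F(2) unfolding le_fun_def N_def by blast
  then obtain x0 where "\<And>\<eta>. F \<eta> = blinfun_apply \<eta> x0"
    using dominated_by_sum_abs_eval_imp_eval[OF \<open>finite Z\<close> F(1)] by blast
  with sep have "\<forall>k\<in>K. blinfun_apply k x0 \<le> blinfun_apply xs x0 - \<epsilon>"
    by simp
  with \<open>\<epsilon> > 0\<close> show ?thesis
    by blast
qed

section \<open>Domains of Jop h\<close>

lemma canon_apply: "blinfun_apply (canon x) f = blinfun_apply f x"
  unfolding canon_def
  by (subst bounded_linear_Blinfun_apply)
     (rule bounded_bilinear.bounded_linear_left[OF bounded_bilinear_blinfun_apply], simp)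

lemma Jop_eq_SUP:
  "Jop h (x, xs) = (SUP p. ereal (blinfun_apply xs (fst p) + blinfun_apply (snd p) x) - h p)"
  by (simp add: Jop_def fconj_def canon_apply)

lemma Jop_translate_le:
  assumes "0 \<le> t"
    and bound: "\<And>y ys. h (y, ys) < \<infinity> \<Longrightarrow> blinfun_apply \<phi> y + blinfun_apply ys u \<le> B"
  shows "Jop h (x + t *\<^sub>R u, xs + t *\<^sub>R \<phi>) \<le> Jop h (x, xs) + ereal (t * B)"
  unfolding Jop_eq_SUP
proof (rule SUP_least)
  fix p :: "'a \<times> ('a \<Rightarrow>\<^sub>L real)"
  obtain y ys where p: "p = (y, ys)" by fastforce
  show "ereal (blinfun_apply (xs + t *\<^sub>R \<phi>) (fst p) + blinfun_apply (snd p) (x + t *\<^sub>R u)) - h p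
        \<le> (SUP p. ereal (blinfun_apply xs (fst p) + blinfun_apply (snd p) x) - h p) + ereal (t * B)"
  proof (cases "h p = \<infinity>")
    case False
    then have "t * (blinfun_apply \<phi> y + blinfun_apply ys u) \<le> t * B"
      using bound \<open>0 \<le> t\<close> p by (simp add: mult_left_mono top.not_eq_extremum)
    moreover have "ereal (blinfun_apply (xs + t *\<^sub>R \<phi>) y + blinfun_apply ys (x + t *\<^sub>R u)) - h p
        = (ereal (blinfun_apply xs y + blinfun_apply ys x) - h p)
          + ereal (t * (blinfun_apply \<phi> y + blinfun_apply ys u))"
      by (cases "h p") (simp_all add: blinfun.add_left blinfun.scaleR_left blinfun.add_right
          blinfun.scaleR_right algebra_simps)
    ultimately show ?thesis
      unfolding p fst_conv snd_conv
      by (metis (mono_tags, lifting) SUP_upper UNIV_I add_mono ereal_less_eq(3) fst_conv snd_conv)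
  qed simp
qed

lemma Jop_dom_not_strictly_separated:
  assumes FY: "\<And>x xs. Jop h (x, xs) \<ge> ereal (blinfun_apply xs x)"
    and finite: "Jop h (x, xs) < \<infinity>"
    and orth: "blinfun_apply \<phi> u = 0" and "0 < \<epsilon>"
    and sep: "\<And>y ys. h (y, ys) < \<infinity> \<Longrightarrow>
      blinfun_apply \<phi> y + blinfun_apply ys u \<le> blinfun_apply \<phi> x + blinfun_apply xs u - \<epsilon>"
  shows False
proof -
  define b where "b = blinfun_apply \<phi> x + blinfun_apply xs u"
  obtain j where j: "Jop h (x, xs) = ereal j"
    using FY[where x = x and xs = xs] finite by (cases "Jop h (x, xs)") auto
  have ray: "blinfun_apply xs x + t * b \<le> j + t * (b - \<epsilon>)" if "0 \<le> t" for t
  proof -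
    have "ereal (blinfun_apply xs x + t * b) = ereal (blinfun_apply (xs + t *\<^sub>R \<phi>) (x + t *\<^sub>R u))"
      using orth by (simp add: b_def blinfun.add_left blinfun.scaleR_left blinfun.add_right
          blinfun.scaleR_right algebra_simps)
    also have "\<dots> \<le> Jop h (x + t *\<^sub>R u, xs + t *\<^sub>R \<phi>)"
      by (rule FY)
    also have "\<dots> \<le> Jop h (x, xs) + ereal (t * (b - \<epsilon>))"
      by (rule Jop_translate_le[OF that]) (use sep in \<open>simp add: b_def\<close>)
    also have "\<dots> = ereal (j + t * (b - \<epsilon>))"
      by (simp add: j)
    finally show ?thesis by simp
  qed
  define t where "t = (\<bar>j - blinfun_apply xs x\<bar> + 1) / \<epsilon>"
  have "t * \<epsilon> = \<bar>j - blinfun_apply xs x\<bar> + 1"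
    using \<open>0 < \<epsilon>\<close> by (simp add: t_def)
  moreover have "blinfun_apply xs x + t * b \<le> j + t * b - t * \<epsilon>"
    using ray[of t] \<open>0 < \<epsilon>\<close> by (simp add: t_def right_diff_distrib)
  ultimately show False
    by linarith
qed

lemma dom_f_nonempty_if_Jop_ge:
  assumes FY: "\<And>x xs. Jop h (x, xs) \<ge> ereal (blinfun_apply xs x)"
  shows "dom_f h \<noteq> {}"
proof
  assume "dom_f h = {}"
  then have "h p = \<infinity>" for p
    by (cases p) (auto simp: dom_f_def top.not_eq_extremum)
  then have "Jop h (0, 0) = - \<infinity>"
    by (simp add: Jop_eq_SUP)
  with FY[where x = 0 and xs = 0] show False
    by simp
qed

lemma fst_dom_Jop_subset_closure:
  assumes FY: "\<And>x xs. Jop h (x, xs) \<ge> ereal (blinfun_apply xs x)"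
  shows "fst ` dom_f (Jop h) \<subseteq> closure (convex hull (fst ` dom_f h))"
proof
  fix x assume "x \<in> fst ` dom_f (Jop h)"
  then obtain xs where finite: "Jop h (x, xs) < \<infinity>"
    by (force simp: dom_f_def)
  let ?K = "convex hull (fst ` dom_f h)"
  show "x \<in> closure ?K"
  proof (rule ccontr)
    assume "x \<notin> closure ?K"
    moreover have "?K \<noteq> {}"
      using dom_f_nonempty_if_Jop_ge[OF FY] by simp
    ultimately obtain F \<epsilon> where "0 < (\<epsilon> :: real)" and sep: "\<forall>k\<in>?K. blinfun_apply F k \<le> blinfun_apply F x - \<epsilon>"
      using norm_separation[OF convex_convex_hull, of "fst ` dom_f h" x] by blast
    have "blinfun_apply F y + blinfun_apply ys 0 \<le> blinfun_apply F x + blinfun_apply xs 0 - \<epsilon>"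
      if "h (y, ys) < \<infinity>" for y ys
      using sep that by (force simp: dom_f_def intro: hull_inc)
    from Jop_dom_not_strictly_separated[OF FY finite _ \<open>0 < \<epsilon>\<close> this] show False
      by simp
  qed
qed

lemma snd_dom_Jop_subset_weak_star_closure:
  assumes FY: "\<And>x xs. Jop h (x, xs) \<ge> ereal (blinfun_apply xs x)"
  shows "snd ` dom_f (Jop h) \<subseteq> weak_star_topology closure_of (convex hull (snd ` dom_f h))"
proof
  fix xs assume "xs \<in> snd ` dom_f (Jop h)"
  then obtain x where finite: "Jop h (x, xs) < \<infinity>"
    by (force simp: dom_f_def)
  let ?K = "convex hull (snd ` dom_f h)"
  show "xs \<in> weak_star_topology closure_of ?K"
  proof (rule ccontr)
    assume "xs \<notin> weak_star_topology closure_of ?K"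
    moreover have "?K \<noteq> {}"
      using dom_f_nonempty_if_Jop_ge[OF FY] by simp
    ultimately obtain x0 \<epsilon> where "0 < \<epsilon>"
      and sep: "\<forall>k\<in>?K. blinfun_apply k x0 \<le> blinfun_apply xs x0 - \<epsilon>"
      using weak_star_separation[OF convex_convex_hull, of "snd ` dom_f h" xs] by blast
    have "blinfun_apply 0 y + blinfun_apply ys x0 \<le> blinfun_apply 0 x + blinfun_apply xs x0 - \<epsilon>"
      if "h (y, ys) < \<infinity>" for y ys
      using sep that by (force simp: dom_f_def intro: hull_inc)
    from Jop_dom_not_strictly_separated[OF FY finite _ \<open>0 < \<epsilon>\<close> this] show False
      by simp
  qed
qed

theorem lemma3p2:
  fixes h :: "'a::banach \<times> ('a \<Rightarrow>\<^sub>L real) \<Rightarrow> ereal"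
  assumes "\<And>x xs. Jop h (x, xs) \<ge> ereal (blinfun_apply xs x)"
  shows "snd ` dom_f (Jop h) = fst ` (dom_f (fconj h) \<inter> (UNIV \<times> range canon))
         \<and> snd ` dom_f (Jop h) \<subseteq> weak_star_topology closure_of (convex hull (snd ` dom_f h))
         \<and> canon ` (fst ` dom_f (Jop h)) = snd ` (dom_f (fconj h) \<inter> (UNIV \<times> range canon))
         \<and> fst ` dom_f (Jop h) \<subseteq> closure (convex hull (fst ` dom_f h))"
proof (intro conjI)
  show "snd ` dom_f (Jop h) = fst ` (dom_f (fconj h) \<inter> (UNIV \<times> range canon))"
    by (force simp: dom_f_def Jop_def image_iff)
  show "canon ` (fst ` dom_f (Jop h)) = snd ` (dom_f (fconj h) \<inter> (UNIV \<times> range canon))"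
    by (force simp: dom_f_def Jop_def image_iff)
qed (use snd_dom_Jop_subset_weak_star_closure fst_dom_Jop_subset_closure assms in blast)+

end
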